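(* Let $\{P^{[n]}\in\mathbb{R}^{n\times n}\}_{n\in\mathbb{N}}$ be a sequence of stochastic matrices of increasing dimensions, and suppose there is no $P^{[n]}$-prominent family. Then (i) for every $k\in\mathbb{N}$ there is no $(P^{[n]})^k$-prominent family, and (ii) the sequence $\{P^{[n]}\}$ is finite-time wise.
   Context: A matrix $P$ is stochastic if $P\ge0$ and $P\mathbf{1}=\mathbf{1}$. Given a sequence of $n\times n$ stochastic matrices $\{Q^{[n]}\}$, a $Q^{[n]}$-prominent family is a sequence of sets $\mathcal{B}^{[n]}\subseteq\{1,\dots,n\}$ with $|\mathcal{B}^{[n]}|=o(n)$ whose total one-time influence $\frac1n\sum_{i=1}^n\sum_{j\in\mathcal{B}^{[n]}}Q^{[n]}_{ij}$ is of order $1$; here "there is no $Q^{[n]}$-prominent family" means: for every sequence of sets $\mathcal{B}^{[n]}\subseteq\{1,\dots,n\}$ with $|\mathcal{B}^{[n]}|=o(n)$, one has $\frac1n\sum_{i=1}^n\sum_{j\in\mathcal{B}^{[n]}}Q^{[n]}_{ij}\to0$ as $n\to\infty$. Finite-time wisdom: for each $n$, $x^{[n]}_i(0)=\mu+\xi^{[n]}_i(0)$ with $\mu\in\mathbb{R}$ fixed and $\xi^{[n]}_i(0)$ independent Gaussian with mean $0$ and common finite variance $\sigma^2$; $x^{[n]}(k+1)=P^{[n]}x^{[n]}(k)$; the sequence is finite-time wise if for every $k\in\mathbb{N}$, $\frac1n\sum_i x^{[n]}_i(k)\to\mu$ in probability as $n\to\infty$. *)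

theory Defs
  imports "HOL-Probability.Probability"
begin

text \<open>An n x n real matrix is represented as a function nat => nat => real,
only entries with indices below n being relevant.\<close>

definition stochastic_mat :: "nat \<Rightarrow> (nat \<Rightarrow> nat \<Rightarrow> real) \<Rightarrow> bool" where
  "stochastic_mat n A \<longleftrightarrow>
     (\<forall>i<n. \<forall>j<n. 0 \<le> A i j) \<and> (\<forall>i<n. (\<Sum>j<n. A i j) = 1)"

definition mat_mult :: "nat \<Rightarrow> (nat \<Rightarrow> nat \<Rightarrow> real) \<Rightarrow> (nat \<Rightarrow> nat \<Rightarrow> real) \<Rightarrow> (nat \<Rightarrow> nat \<Rightarrow> real)" where
  "mat_mult n A B = (\<lambda>i j. \<Sum>l<n. A i l * B l j)"

fun mat_pow :: "nat \<Rightarrow> (nat \<Rightarrow> nat \<Rightarrow> real) \<Rightarrow> nat \<Rightarrow> (nat \<Rightarrow> nat \<Rightarrow> real)" where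
  "mat_pow n A 0 = (\<lambda>i j. if i = j then 1 else 0)"
| "mat_pow n A (Suc k) = mat_mult n (mat_pow n A k) A"

definition influence :: "nat \<Rightarrow> (nat \<Rightarrow> nat \<Rightarrow> real) \<Rightarrow> nat set \<Rightarrow> real" where
  "influence n Q B = (1 / real n) * (\<Sum>i<n. \<Sum>j\<in>B. Q i j)"

definition no_prominent_family :: "(nat \<Rightarrow> nat \<Rightarrow> nat \<Rightarrow> real) \<Rightarrow> bool" where
  "no_prominent_family Q \<longleftrightarrow>
     (\<forall>B :: nat \<Rightarrow> nat set.
        (\<forall>n. B n \<subseteq> {..<n}) \<and> (\<lambda>n. real (card (B n)) / real n) \<longlonglongrightarrow> 0
        \<longrightarrow> (\<lambda>n. influence n (Q n) (B n)) \<longlonglongrightarrow> 0)"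

definition opinion :: "nat \<Rightarrow> (nat \<Rightarrow> nat \<Rightarrow> real) \<Rightarrow> (nat \<Rightarrow> real) \<Rightarrow> nat \<Rightarrow> nat \<Rightarrow> real" where
  "opinion n P x0 k i = (\<Sum>j<n. mat_pow n P k i j * x0 j)"

definition finite_time_wise ::
  "'a measure \<Rightarrow> (nat \<Rightarrow> nat \<Rightarrow> nat \<Rightarrow> real) \<Rightarrow> real \<Rightarrow> (nat \<Rightarrow> nat \<Rightarrow> 'a \<Rightarrow> real) \<Rightarrow> bool" where
  "finite_time_wise M P \<mu> \<xi> \<longleftrightarrow>
     (\<forall>k::nat. \<forall>\<epsilon>>0.
        (\<lambda>n. measure M {\<omega> \<in> space M.
               \<bar>(1 / real n) * (\<Sum>i<n. opinion n (P n) (\<lambda>j. \<mu> + \<xi> n j \<omega>) k i) - \<mu>\<bar> > \<epsilon>})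
        \<longlonglongrightarrow> 0)"

end

theory Submission
  imports Defs
begin

text \<open>
  Influence composes along matrix products: if a set \<open>B\<close> of size \<open>o(n)\<close> receives average
  weight \<open>a\<^sub>n\<close> under \<open>A\<close>, then by Markov's inequality the rows putting more than
  \<open>\<surd>a\<^sub>n\<close> of their mass on \<open>B\<close> form a family of size at most \<open>n \<surd>a\<^sub>n\<close>, whose
  \<open>Q\<close>-influence vanishes; the remaining rows contribute at most \<open>\<surd>a\<^sub>n\<close> to the
  \<open>Q A\<close>-influence of \<open>B\<close>. By induction no power of \<open>P\<close> has a prominent family.
  For wisdom, the deviation of the average opinion at time \<open>k\<close> from \<open>\<mu>\<close> is
  \<open>\<Sum>\<^sub>j c\<^sub>j \<xi>\<^sub>j / n\<close>, with \<open>c\<^sub>j\<close> the column sums of \<open>P\<^sup>k\<close>; its variance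
  \<open>\<sigma>\<^sup>2 \<Sum>\<^sub>j c\<^sub>j\<^sup>2 / n\<^sup>2\<close> is at most \<open>\<sigma>\<^sup>2 max\<^sub>j c\<^sub>j / n\<close>, the influence of a single node, which
  tends to zero, and Chebyshev's inequality concludes.
\<close>

lemma stochastic_mat_nonneg: "stochastic_mat n A \<Longrightarrow> i < n \<Longrightarrow> j < n \<Longrightarrow> 0 \<le> A i j"
  by (simp add: stochastic_mat_def)

lemma stochastic_mat_row_sum: "stochastic_mat n A \<Longrightarrow> i < n \<Longrightarrow> (\<Sum>j<n. A i j) = 1"
  by (simp add: stochastic_mat_def)

lemma stochastic_mat_mult:
  assumes A: "stochastic_mat n A" and B: "stochastic_mat n B"
  shows "stochastic_mat n (mat_mult n A B)"
  unfolding stochastic_mat_def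
proof (intro conjI allI impI)
  fix i j assume "i < n" "j < n"
  then show "0 \<le> mat_mult n A B i j"
    unfolding mat_mult_def
    by (intro sum_nonneg mult_nonneg_nonneg)
      (auto intro: stochastic_mat_nonneg[OF A] stochastic_mat_nonneg[OF B])
next
  fix i assume i: "i < n"
  have "(\<Sum>j<n. mat_mult n A B i j) = (\<Sum>l<n. A i l * (\<Sum>j<n. B l j))"
    unfolding mat_mult_def sum_distrib_left by (rule sum.swap)
  also have "\<dots> = 1"
    using stochastic_mat_row_sum[OF B] stochastic_mat_row_sum[OF A i] by simp
  finally show "(\<Sum>j<n. mat_mult n A B i j) = 1" .
qed

lemma stochastic_mat_pow: "stochastic_mat n A \<Longrightarrow> stochastic_mat n (mat_pow n A k)"
proof (induction k)
  case 0
  show ?case by (simp add: stochastic_mat_def)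
next
  case (Suc k)
  then show ?case by (simp add: stochastic_mat_mult)
qed

lemma influence_nonneg:
  assumes "stochastic_mat n A" "B \<subseteq> {..<n}"
  shows "0 \<le> influence n A B"
  unfolding influence_def using assms
  by (intro mult_nonneg_nonneg sum_nonneg) (auto intro: stochastic_mat_nonneg)

lemma influence_identity:
  assumes "B \<subseteq> {..<n}"
  shows "influence n (mat_pow n A 0) B = real (card B) / real n"
proof -
  have "finite B" using assms finite_subset by blast
  then have "(\<Sum>i<n. \<Sum>j\<in>B. mat_pow n A 0 i j) = (\<Sum>i<n. if i \<in> B then 1 else 0)"
    by (intro sum.cong refl) simp
  also have "\<dots> = real (card B)"
    using assms by (simp add: sum.If_cases Int_absorb1)
  finally show ?thesis unfolding influence_def by simp
qed

lemma influence_mat_mult: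
  "influence n (mat_mult n Q A) B = (1 / real n) * (\<Sum>i<n. \<Sum>l<n. Q i l * (\<Sum>j\<in>B. A l j))"
  unfolding influence_def mat_mult_def sum_distrib_left by (simp add: sum.swap[of _ B])

lemma card_above_sqrt_mean_le:
  fixes w :: "nat \<Rightarrow> real"
  assumes w_nonneg: "\<And>l. l < n \<Longrightarrow> 0 \<le> w l" and mean: "(\<Sum>l<n. w l) \<le> real n * a"
  shows "real (card {l. l < n \<and> sqrt a < w l}) \<le> real n * sqrt a"
proof -
  have "0 \<le> real n * a"
    using mean w_nonneg by (meson order.trans sum_nonneg lessThan_iff)
  then consider "n = 0" | "a = 0" | "0 < a"
    by (cases "n = 0") (auto simp: zero_le_mult_iff zero_less_mult_iff order.order_iff_strict)
  then show ?thesis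
  proof cases
    case 1
    then show ?thesis by simp
  next
    case 2
    then have "\<forall>l\<in>{..<n}. w l = 0"
      using mean w_nonneg by (subst sum_nonneg_eq_0_iff[symmetric]) (auto intro: antisym sum_nonneg)
    then show ?thesis using 2 by simp
  next
    case 3
    have "sqrt a * real (card {l. l < n \<and> sqrt a < w l}) = (\<Sum>l | l < n \<and> sqrt a < w l. sqrt a)"
      by simp
    also have "\<dots> \<le> (\<Sum>l | l < n \<and> sqrt a < w l. w l)"
      by (intro sum_mono) simp
    also have "\<dots> \<le> (\<Sum>l<n. w l)"
      using w_nonneg by (intro sum_mono2) auto
    also have "\<dots> \<le> sqrt a * (real n * sqrt a)"
      using mean 3 by (simp add: mult.commute mult.left_commute)
    finally show ?thesis using 3 by simp
  qed
qed

lemma weighted_sum_le_above_threshold: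
  fixes q w :: "nat \<Rightarrow> real"
  assumes q_nonneg: "\<And>l. l < n \<Longrightarrow> 0 \<le> q l" and q_sum: "(\<Sum>l<n. q l) = 1"
    and w_le: "\<And>l. l < n \<Longrightarrow> w l \<le> 1" and "0 \<le> t"
  shows "(\<Sum>l<n. q l * w l) \<le> (\<Sum>l | l < n \<and> t < w l. q l) + t"
proof -
  have "(\<Sum>l<n. q l * w l) \<le> (\<Sum>l<n. (if t < w l then q l else 0) + t * q l)"
  proof (intro sum_mono)
    fix l assume "l \<in> {..<n}"
    then have "0 \<le> q l" "w l \<le> 1" using q_nonneg w_le by auto
    then show "q l * w l \<le> (if t < w l then q l else 0) + t * q l"
      using \<open>0 \<le> t\<close>
      by (cases "t < w l") (auto simp: mult_left_le add_increasing2 mult.commute[of t] mult_left_mono)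
  qed
  also have "\<dots> = (\<Sum>l | l < n \<and> t < w l. q l) + t"
    by (simp add: sum.distrib sum.If_cases q_sum[unfolded lessThan_def] lessThan_def Collect_conj_eq
        flip: sum_distrib_left)
  finally show ?thesis .
qed

lemma influence_mat_mult_le:
  assumes Q: "stochastic_mat n Q" and A: "stochastic_mat n A" and B: "B \<subseteq> {..<n}"
    and "0 \<le> t"
  shows "influence n (mat_mult n Q A) B
    \<le> influence n Q {l. l < n \<and> t < (\<Sum>j\<in>B. A l j)} + t"
proof -
  let ?w = "\<lambda>l. \<Sum>j\<in>B. A l j"
  have "?w l \<le> 1" if "l < n" for l
  proof -
    have "?w l \<le> (\<Sum>j<n. A l j)"
      using B that by (intro sum_mono2) (auto intro: stochastic_mat_nonneg[OF A])
    then show ?thesis using stochastic_mat_row_sum[OF A that] by simp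
  qed
  then have "(\<Sum>i<n. \<Sum>l<n. Q i l * ?w l) \<le> (\<Sum>i<n. (\<Sum>l | l < n \<and> t < ?w l. Q i l) + t)"
    using \<open>0 \<le> t\<close> stochastic_mat_nonneg[OF Q] stochastic_mat_row_sum[OF Q]
    by (intro sum_mono weighted_sum_le_above_threshold) auto
  also have "\<dots> = (\<Sum>i<n. \<Sum>l | l < n \<and> t < ?w l. Q i l) + real n * t"
    by (simp add: sum.distrib)
  finally have "(\<Sum>i<n. \<Sum>l<n. Q i l * ?w l)
      \<le> (\<Sum>i<n. \<Sum>l | l < n \<and> t < ?w l. Q i l) + real n * t" .
  then show ?thesis
    unfolding influence_mat_mult using \<open>0 \<le> t\<close>
    by (cases "n = 0")
      (simp_all add: influence_def pos_divide_le_eq distrib_right mult.commute[of t])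
qed

lemma no_prominent_familyI:
  assumes "\<And>B. (\<And>n. B n \<subseteq> {..<n}) \<Longrightarrow> (\<lambda>n. real (card (B n)) / real n) \<longlonglongrightarrow> 0
      \<Longrightarrow> (\<lambda>n. influence n (Q n) (B n)) \<longlonglongrightarrow> 0"
  shows "no_prominent_family Q"
  using assms unfolding no_prominent_family_def by blast

lemma no_prominent_familyD:
  assumes "no_prominent_family Q" "\<And>n. B n \<subseteq> {..<n}"
    "(\<lambda>n. real (card (B n)) / real n) \<longlonglongrightarrow> 0"
  shows "(\<lambda>n. influence n (Q n) (B n)) \<longlonglongrightarrow> 0"
  using assms unfolding no_prominent_family_def by blast

lemma no_prominent_family_mat_mult:
  assumes Q: "\<And>n. stochastic_mat n (Q n)" and A: "\<And>n. stochastic_mat n (A n)"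
    and no_Q: "no_prominent_family Q" and no_A: "no_prominent_family A"
  shows "no_prominent_family (\<lambda>n. mat_mult n (Q n) (A n))"
proof (rule no_prominent_familyI)
  fix B :: "nat \<Rightarrow> nat set"
  assume B: "\<And>n. B n \<subseteq> {..<n}" and card_B: "(\<lambda>n. real (card (B n)) / real n) \<longlonglongrightarrow> 0"
  define a where "a n = influence n (A n) (B n)" for n
  define L where "L n = {l. l < n \<and> sqrt (a n) < (\<Sum>j\<in>B n. A n l j)}" for n
  have a_nonneg: "0 \<le> a n" for n
    unfolding a_def by (rule influence_nonneg[OF A B])
  have sqrt_a: "(\<lambda>n. sqrt (a n)) \<longlonglongrightarrow> 0"
    using tendsto_real_sqrt[OF no_prominent_familyD[OF no_A B card_B]] by (simp add: a_def)
  have "real (card (L n)) / real n \<le> sqrt (a n)" for n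
  proof -
    have "(\<Sum>l<n. \<Sum>j\<in>B n. A n l j) \<le> real n * a n"
      by (cases "n = 0") (simp_all add: a_def influence_def)
    then have "real (card (L n)) \<le> real n * sqrt (a n)"
      unfolding L_def using B[of n] A[of n]
      by (intro card_above_sqrt_mean_le) (auto intro!: sum_nonneg stochastic_mat_nonneg)
    with a_nonneg[of n] show ?thesis by (cases "n = 0") (simp_all add: divide_le_eq mult.commute)
  qed
  then have "(\<lambda>n. real (card (L n)) / real n) \<longlonglongrightarrow> 0"
    by (intro tendsto_sandwich[OF _ _ tendsto_const sqrt_a]) (simp_all add: always_eventually)
  then have "(\<lambda>n. influence n (Q n) (L n)) \<longlonglongrightarrow> 0"
    using no_prominent_familyD[OF no_Q, of L] by (auto simp: L_def)
  then have bound: "(\<lambda>n. influence n (Q n) (L n) + sqrt (a n)) \<longlonglongrightarrow> 0"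
    using sqrt_a by (rule tendsto_add_zero)
  moreover have "influence n (mat_mult n (Q n) (A n)) (B n)
      \<le> influence n (Q n) (L n) + sqrt (a n)" for n
    unfolding L_def using Q A B a_nonneg by (intro influence_mat_mult_le) auto
  moreover have "0 \<le> influence n (mat_mult n (Q n) (A n)) (B n)" for n
    by (rule influence_nonneg[OF stochastic_mat_mult[OF Q A] B])
  ultimately show "(\<lambda>n. influence n (mat_mult n (Q n) (A n)) (B n)) \<longlonglongrightarrow> 0"
    by (intro tendsto_sandwich[OF _ _ tendsto_const bound]) (simp_all add: always_eventually)
qed

lemma no_prominent_family_mat_pow:
  assumes stoch: "\<And>n. stochastic_mat n (P n)" and no_P: "no_prominent_family P"
  shows "no_prominent_family (\<lambda>n. mat_pow n (P n) k)"
proof (induction k)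
  case 0
  show ?case
    by (rule no_prominent_familyI) (simp add: influence_identity del: mat_pow.simps)
next
  case (Suc k)
  then show ?case
    using stoch no_P by (simp add: no_prominent_family_mat_mult stochastic_mat_pow)
qed

definition col_sum :: "nat \<Rightarrow> (nat \<Rightarrow> nat \<Rightarrow> real) \<Rightarrow> nat \<Rightarrow> real" where
  "col_sum n A j = (\<Sum>i<n. A i j)"

lemma influence_singleton: "influence n A {j} = col_sum n A j / real n"
  by (simp add: influence_def col_sum_def)

lemma col_sum_nonneg: "stochastic_mat n A \<Longrightarrow> j < n \<Longrightarrow> 0 \<le> col_sum n A j"
  unfolding col_sum_def by (auto intro: sum_nonneg stochastic_mat_nonneg)

lemma sum_col_sum: "stochastic_mat n A \<Longrightarrow> (\<Sum>j<n. col_sum n A j) = real n"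
  unfolding col_sum_def by (subst sum.swap) (simp add: stochastic_mat_row_sum)

lemma sum_square_le_max_mult_sum:
  fixes c :: "nat \<Rightarrow> real"
  assumes "\<And>l. l < n \<Longrightarrow> 0 \<le> c l \<and> c l \<le> m"
  shows "(\<Sum>l<n. (c l)\<^sup>2) \<le> m * (\<Sum>l<n. c l)"
  unfolding sum_distrib_left power2_eq_square using assms
  by (intro sum_mono mult_right_mono) auto

lemma no_prominent_family_sum_col_sum_square:
  assumes stoch: "\<And>n. stochastic_mat n (Q n)" and no_Q: "no_prominent_family Q"
  shows "(\<lambda>n. (\<Sum>j<n. (col_sum n (Q n) j)\<^sup>2) / (real n)\<^sup>2) \<longlonglongrightarrow> 0"
proof -
  have "\<exists>j. 0 < n \<longrightarrow> j < n \<and> (\<forall>l<n. col_sum n (Q n) l \<le> col_sum n (Q n) j)" for n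
  proof (cases "n = 0")
    case False
    then have "Max (col_sum n (Q n) ` {..<n}) \<in> col_sum n (Q n) ` {..<n}"
      by (intro Max_in) auto
    then obtain j where "j < n" "col_sum n (Q n) j = Max (col_sum n (Q n) ` {..<n})"
      by auto
    then show ?thesis by auto
  qed simp
  then obtain j where j: "\<And>n. 0 < n \<Longrightarrow> j n < n \<and> (\<forall>l<n. col_sum n (Q n) l \<le> col_sum n (Q n) (j n))"
    by metis
  define B where "B n = (if n = 0 then {} else {j n})" for n
  have lim: "(\<lambda>n. influence n (Q n) (B n)) \<longlonglongrightarrow> 0"
  proof (rule no_prominent_familyD[OF no_Q])
    show "B n \<subseteq> {..<n}" for n using j by (simp add: B_def)
    have "(\<lambda>n. real (card (B n)) / real n) = (\<lambda>n. 1 / real n)"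
      by (auto simp: B_def)
    then show "(\<lambda>n. real (card (B n)) / real n) \<longlonglongrightarrow> 0"
      using lim_1_over_n by simp
  qed
  have upper: "(\<Sum>l<n. (col_sum n (Q n) l)\<^sup>2) / (real n)\<^sup>2 \<le> influence n (Q n) (B n)" for n
  proof (cases "n = 0")
    case False
    have "(\<Sum>l<n. (col_sum n (Q n) l)\<^sup>2) \<le> col_sum n (Q n) (j n) * (\<Sum>l<n. col_sum n (Q n) l)"
      using False j[of n] col_sum_nonneg[OF stoch] by (intro sum_square_le_max_mult_sum) auto
    then have "(\<Sum>l<n. (col_sum n (Q n) l)\<^sup>2) \<le> col_sum n (Q n) (j n) * real n"
      by (simp only: sum_col_sum[OF stoch])
    then show ?thesis
      using False by (simp add: B_def influence_singleton divide_le_eq power2_eq_square mult.assoc)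
  qed (simp add: B_def influence_def)
  have lower: "0 \<le> (\<Sum>l<n. (col_sum n (Q n) l)\<^sup>2) / (real n)\<^sup>2" for n
    by (simp add: sum_nonneg)
  show ?thesis
    by (rule tendsto_sandwich[OF always_eventually always_eventually tendsto_const lim])
      (use lower upper in blast)+
qed

lemma opinion_average_deviation:
  assumes "stochastic_mat n A" "0 < n"
  shows "(1 / real n) * (\<Sum>i<n. opinion n A (\<lambda>j. \<mu> + x j) k i) - \<mu>
       = (\<Sum>j<n. col_sum n (mat_pow n A k) j * x j) / real n"
proof -
  have "(\<Sum>i<n. opinion n A (\<lambda>j. \<mu> + x j) k i)
      = (\<Sum>i<n. \<mu> * (\<Sum>j<n. mat_pow n A k i j) + (\<Sum>j<n. mat_pow n A k i j * x j))"
    unfolding opinion_def by (simp add: algebra_simps sum.distrib sum_distrib_left)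
  also have "\<dots> = real n * \<mu> + (\<Sum>i<n. \<Sum>j<n. mat_pow n A k i j * x j)"
    using stochastic_mat_row_sum[OF stochastic_mat_pow[OF assms(1)]] by (simp add: sum.distrib)
  also have "(\<Sum>i<n. \<Sum>j<n. mat_pow n A k i j * x j) = (\<Sum>j<n. col_sum n (mat_pow n A k) j * x j)"
    unfolding col_sum_def sum_distrib_right by (rule sum.swap)
  finally show ?thesis using assms(2) by (simp add: field_simps)
qed

lemma (in prob_space) indep_vars_expectation_mult:
  fixes X :: "'i \<Rightarrow> 'a \<Rightarrow> real"
  assumes indep: "indep_vars (\<lambda>_. borel) X I" and "i \<in> I" "j \<in> I" "i \<noteq> j"
    and "integrable M (X i)" "integrable M (X j)"
  shows "integrable M (\<lambda>\<omega>. X i \<omega> * X j \<omega>)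
    \<and> expectation (\<lambda>\<omega>. X i \<omega> * X j \<omega>) = expectation (X i) * expectation (X j)"
proof -
  have "indep_vars (\<lambda>_. borel) X {i, j}"
    using indep by (rule indep_vars_subset) (use assms(2,3) in auto)
  then show ?thesis
    using indep_vars_lebesgue_integral[of "{i, j}" X] indep_vars_integrable[of "{i, j}" X]
      assms(4-6)
    by auto
qed

lemma (in prob_space) normal_distributed_second_moment:
  assumes "0 < \<sigma>" and D: "distributed M lborel X (normal_density 0 \<sigma>)"
  shows "integrable M (\<lambda>\<omega>. (X \<omega>)\<^sup>2) \<and> expectation (\<lambda>\<omega>. (X \<omega>)\<^sup>2) = \<sigma>\<^sup>2"
proof
  show "integrable M (\<lambda>\<omega>. (X \<omega>)\<^sup>2)"
    by (subst distributed_integrable[OF D, symmetric])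
      (use integrable_normal_moment[OF assms(1), of 0 2] in simp_all)
  show "expectation (\<lambda>\<omega>. (X \<omega>)\<^sup>2) = \<sigma>\<^sup>2"
    using normal_distributed_variance[OF assms] normal_distributed_expectation[OF assms] by simp
qed

lemma (in prob_space) expectation_square_weighted_sum:
  fixes X :: "nat \<Rightarrow> 'a \<Rightarrow> real"
  assumes indep: "indep_vars (\<lambda>_. borel) X {..<n}"
    and square_int: "\<And>i. i < n \<Longrightarrow> integrable M (\<lambda>\<omega>. (X i \<omega>)\<^sup>2)"
    and centered: "\<And>i. i < n \<Longrightarrow> expectation (X i) = 0"
    and second: "\<And>i. i < n \<Longrightarrow> expectation (\<lambda>\<omega>. (X i \<omega>)\<^sup>2) = \<sigma>\<^sup>2"
  shows "integrable M (\<lambda>\<omega>. (\<Sum>j<n. c j * X j \<omega>)\<^sup>2)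
    \<and> expectation (\<lambda>\<omega>. (\<Sum>j<n. c j * X j \<omega>)\<^sup>2) = \<sigma>\<^sup>2 * (\<Sum>j<n. (c j)\<^sup>2)"
proof -
  have int: "integrable M (X i)" if "i < n" for i
  proof (rule square_integrable_imp_integrable[OF _ square_int[OF that]])
    show "X i \<in> borel_measurable M"
      using indep that unfolding indep_vars_def by simp
  qed
  have pair: "integrable M (\<lambda>\<omega>. X i \<omega> * X j \<omega>)
      \<and> expectation (\<lambda>\<omega>. X i \<omega> * X j \<omega>) = (if i = j then \<sigma>\<^sup>2 else 0)"
    if "i < n" "j < n" for i j
  proof (cases "i = j")
    case True
    then show ?thesis using square_int second that by (simp add: power2_eq_square)
  next
    case False
    then show ?thesis
      using indep_vars_expectation_mult[OF indep _ _ False] int centered that by simp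
  qed
  have square: "(\<Sum>j<n. c j * X j \<omega>)\<^sup>2 = (\<Sum>i<n. \<Sum>j<n. (c i * c j) * (X i \<omega> * X j \<omega>))" for \<omega>
    by (simp add: power2_eq_square sum_product algebra_simps)
  have "integrable M (\<lambda>\<omega>. \<Sum>i<n. \<Sum>j<n. (c i * c j) * (X i \<omega> * X j \<omega>))"
    using pair by (intro Bochner_Integration.integrable_sum integrable_mult_right) auto
  moreover have "expectation (\<lambda>\<omega>. \<Sum>i<n. \<Sum>j<n. (c i * c j) * (X i \<omega> * X j \<omega>))
      = (\<Sum>i<n. \<Sum>j<n. expectation (\<lambda>\<omega>. (c i * c j) * (X i \<omega> * X j \<omega>)))"
    using pair by (subst Bochner_Integration.integral_sum)
      (auto intro!: sum.cong Bochner_Integration.integral_sum Bochner_Integration.integrable_sum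
        integrable_mult_right simp del: integral_mult_right_zero)
  moreover have "\<dots> = (\<Sum>i<n. \<Sum>j<n. (c i * c j) * (if i = j then \<sigma>\<^sup>2 else 0))"
    using pair by (intro sum.cong refl) simp
  moreover have "(\<Sum>i<n. \<Sum>j<n. (c i * c j) * (if i = j then \<sigma>\<^sup>2 else 0)) = \<sigma>\<^sup>2 * (\<Sum>j<n. (c j)\<^sup>2)"
    by (simp add: sum_distrib_left power2_eq_square mult.commute if_distrib cong: if_cong)
  ultimately show ?thesis unfolding square by simp
qed

lemma (in prob_space) opinion_average_deviation_prob_le:
  assumes stoch: "stochastic_mat n A" and "0 < n" "0 < \<sigma>" "0 < \<epsilon>"
    and gauss: "\<And>i. i < n \<Longrightarrow> distributed M lborel (X i) (normal_density 0 \<sigma>)"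
    and indep: "indep_vars (\<lambda>_. borel) X {..<n}"
  shows "measure M {\<omega> \<in> space M.
      \<bar>(1 / real n) * (\<Sum>i<n. opinion n A (\<lambda>j. \<mu> + X j \<omega>) k i) - \<mu>\<bar> > \<epsilon>}
    \<le> \<sigma>\<^sup>2 * ((\<Sum>j<n. (col_sum n (mat_pow n A k) j)\<^sup>2) / (real n)\<^sup>2) / \<epsilon>\<^sup>2"
proof -
  define c where "c = col_sum n (mat_pow n A k)"
  define f where "f \<omega> = (\<Sum>j<n. c j * X j \<omega>) / real n" for \<omega>
  have moment: "integrable M (\<lambda>\<omega>. (\<Sum>j<n. c j * X j \<omega>)\<^sup>2)
      \<and> expectation (\<lambda>\<omega>. (\<Sum>j<n. c j * X j \<omega>)\<^sup>2) = \<sigma>\<^sup>2 * (\<Sum>j<n. (c j)\<^sup>2)"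
    using normal_distributed_second_moment[OF \<open>0 < \<sigma>\<close> gauss]
      normal_distributed_expectation[OF \<open>0 < \<sigma>\<close> gauss]
    by (intro expectation_square_weighted_sum[OF indep]) auto
  have f_square: "(\<lambda>\<omega>. (f \<omega>)\<^sup>2) = (\<lambda>\<omega>. (\<Sum>j<n. c j * X j \<omega>)\<^sup>2 / (real n)\<^sup>2)"
    unfolding f_def by (simp add: power_divide)
  have f_meas: "f \<in> borel_measurable M"
    unfolding f_def using distributed_measurable[OF gauss]
    by (intro borel_measurable_divide borel_measurable_sum borel_measurable_times) auto
  have "measure M {\<omega> \<in> space M.
      \<bar>(1 / real n) * (\<Sum>i<n. opinion n A (\<lambda>j. \<mu> + X j \<omega>) k i) - \<mu>\<bar> > \<epsilon>}
    = measure M {\<omega> \<in> space M. \<bar>f \<omega>\<bar> > \<epsilon>}"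
    unfolding f_def c_def using opinion_average_deviation[OF stoch \<open>0 < n\<close>] by simp
  also have "\<dots> \<le> measure M {\<omega> \<in> space M. \<bar>f \<omega>\<bar> \<ge> \<epsilon>}"
    using f_meas by (intro finite_measure_mono) auto
  also have "\<dots> \<le> expectation (\<lambda>\<omega>. (f \<omega>)\<^sup>2) / \<epsilon>\<^sup>2"
    using moment by (intro second_moment_method[OF f_meas _ \<open>0 < \<epsilon>\<close>]) (simp add: f_square)
  also have "\<dots> = \<sigma>\<^sup>2 * ((\<Sum>j<n. (c j)\<^sup>2) / (real n)\<^sup>2) / \<epsilon>\<^sup>2"
    using moment by (simp add: f_square)
  finally show ?thesis unfolding c_def .
qed

lemma finite_time_wise_if_no_prominent_powers:
  fixes P :: "nat \<Rightarrow> nat \<Rightarrow> nat \<Rightarrow> real" and \<xi> :: "nat \<Rightarrow> nat \<Rightarrow> 'a \<Rightarrow> real"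
  assumes stoch: "\<And>n. stochastic_mat n (P n)"
    and no_pow: "\<And>k. no_prominent_family (\<lambda>n. mat_pow n (P n) k)"
    and "prob_space M" and "0 < \<sigma>"
    and gauss: "\<And>n i. i < n \<Longrightarrow> distributed M lborel (\<xi> n i) (normal_density 0 \<sigma>)"
    and indep: "\<And>n. prob_space.indep_vars M (\<lambda>_. borel) (\<xi> n) {..<n}"
  shows "finite_time_wise M P \<mu> \<xi>"
  unfolding finite_time_wise_def
proof (intro allI impI)
  interpret prob_space M by fact
  fix k :: nat and \<epsilon> :: real
  assume "0 < \<epsilon>"
  define s where "s n = (\<Sum>j<n. (col_sum n (mat_pow n (P n) k) j)\<^sup>2) / (real n)\<^sup>2" for n
  have "s \<longlonglongrightarrow> 0"
    unfolding s_def using stochastic_mat_pow[OF stoch] no_pow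
    by (rule no_prominent_family_sum_col_sum_square)
  then have bound: "(\<lambda>n. \<sigma>\<^sup>2 * s n / \<epsilon>\<^sup>2) \<longlonglongrightarrow> 0"
    by (auto intro: tendsto_mult_right_zero tendsto_divide_zero)
  have "\<forall>\<^sub>F n in sequentially. measure M {\<omega> \<in> space M.
      \<bar>(1 / real n) * (\<Sum>i<n. opinion n (P n) (\<lambda>j. \<mu> + \<xi> n j \<omega>) k i) - \<mu>\<bar> > \<epsilon>}
    \<le> \<sigma>\<^sup>2 * s n / \<epsilon>\<^sup>2"
    using eventually_gt_at_top[of 0]
  proof eventually_elim
    case (elim n)
    show ?case unfolding s_def
      by (rule opinion_average_deviation_prob_le[OF stoch elim \<open>0 < \<sigma>\<close> \<open>0 < \<epsilon>\<close> gauss indep])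
  qed
  then show "(\<lambda>n. measure M {\<omega> \<in> space M.
      \<bar>(1 / real n) * (\<Sum>i<n. opinion n (P n) (\<lambda>j. \<mu> + \<xi> n j \<omega>) k i) - \<mu>\<bar> > \<epsilon>}) \<longlonglongrightarrow> 0"
    by (intro tendsto_sandwich[OF always_eventually _ tendsto_const bound]) simp_all
qed

theorem theorem4:
  fixes P :: "nat \<Rightarrow> nat \<Rightarrow> nat \<Rightarrow> real"
    and M :: "'a measure" and \<mu> \<sigma> :: real
    and \<xi> :: "nat \<Rightarrow> nat \<Rightarrow> 'a \<Rightarrow> real"
  assumes stoch: "\<And>n. stochastic_mat n (P n)"
    and noprom: "no_prominent_family P"
    and prob: "prob_space M"
    and sigma_pos: "\<sigma> > 0"
    and gauss: "\<And>n i. i < n \<Longrightarrow> distributed M lborel (\<xi> n i) (normal_density 0 \<sigma>)"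
    and indep: "\<And>n. prob_space.indep_vars M (\<lambda>_. borel) (\<xi> n) {..<n}"
  shows "(\<forall>k. no_prominent_family (\<lambda>n. mat_pow n (P n) k))
         \<and> finite_time_wise M P \<mu> \<xi>"
proof
  show no_pow: "\<forall>k. no_prominent_family (\<lambda>n. mat_pow n (P n) k)"
    using no_prominent_family_mat_pow[OF stoch noprom] by blast
  show "finite_time_wise M P \<mu> \<xi>"
    using no_pow
    by (intro finite_time_wise_if_no_prominent_powers[OF stoch _ prob sigma_pos gauss indep]) blast
qed

end
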